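(* Let $\{\theta_k\}_{k=0}^\infty$ be the positive sequence with $\theta_0=1$ and $\theta_{k+1}^2-\theta_{k+1}-\theta_k^2=0$ for $k=0,1,\dots$. Then there exists a real constant $\zeta$ (numerically $\zeta\approx0.646$) such that \[ \theta_k=\frac{k+\zeta+1}{2}+\frac{\log k}{4}+o(1)\quad\text{as }k\to\infty. \]
   Context: $\log$ is the natural logarithm. *)

theory Defs
  imports "HOL-Analysis.Analysis"
begin

end

theory Submission
  imports Defs
begin

(* The increment a = \<theta>\<^sub>k\<^sub>+\<^sub>1 - \<theta>\<^sub>k - 1/2 satisfies a (2\<theta>\<^sub>k + a) = 1/4, so 0 < a \<le> 1/(8\<theta>\<^sub>k)
   and a = 1/(8\<theta>\<^sub>k) + O(\<theta>\<^sub>k\<^sup>-\<^sup>3). Summing these bounds gives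
   k/2 \<le> \<theta>\<^sub>k - 1 \<le> k/2 + (sqrt k)/4, hence 1/(8\<theta>\<^sub>k) = 1/(4k) + O(k\<^sup>-\<^sup>3\<^sup>/\<^sup>2); together with
   log (k+1) - log k = 1/k + O(k\<^sup>-\<^sup>2) this makes the increments of the centred sequence
   \<theta>\<^sub>k - k/2 - (log k)/4 of size O(k\<^sup>-\<^sup>3\<^sup>/\<^sup>2), hence summable. Its limit L gives \<zeta> = 2L - 1. *)

lemma quadratic_step_increment_pos:
  fixes t t' :: real
  assumes "t > 0" "t' > 0" "t'\<^sup>2 - t' = t\<^sup>2"
  shows "t' - t - 1/2 > 0"
proof -
  have "0 < t' * (t' - 1)"
    using assms by (simp add: algebra_simps power2_eq_square)
  then have "t' > 1"
    using \<open>t' > 0\<close> by (simp add: zero_less_mult_iff)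
  moreover have "0 < (t' - t - 1/2) * (t' + t - 1/2)"
    using assms(3) by (simp add: algebra_simps power2_eq_square)
  ultimately show ?thesis
    using \<open>t > 0\<close> by (simp add: zero_less_mult_iff)
qed

lemma quadratic_step_increment_le:
  fixes t t' :: real
  assumes "t > 0" "t' > 0" "t'\<^sup>2 - t' = t\<^sup>2"
  shows "t' - t - 1/2 \<le> 1/(8*t)"
proof -
  define a where "a = t' - t - 1/2"
  have "2*t*a + a\<^sup>2 = 1/4"
    using assms(3) unfolding a_def by (simp add: algebra_simps power2_eq_square)
  then have "2*t*a \<le> 1/4"
    using zero_le_power2[of a] by linarith
  then show ?thesis
    using \<open>t > 0\<close> unfolding a_def by (simp add: field_simps)
qed

lemma quadratic_step_increment_approx:
  fixes t t' :: real
  assumes "t > 0" "t' > 0" "t'\<^sup>2 - t' = t\<^sup>2"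
  shows "\<bar>t' - t - 1/2 - 1/(8*t)\<bar> \<le> 1/(128*t^3)"
proof -
  define a where "a = t' - t - 1/2"
  have a_pos: "a > 0" and a_le: "a \<le> 1/(8*t)"
    using quadratic_step_increment_pos[OF assms] quadratic_step_increment_le[OF assms]
    unfolding a_def by auto
  have "1/(8*t) - a = a\<^sup>2/(2*t)"
    using assms unfolding a_def by (simp add: field_simps power2_eq_square)
  also have "\<dots> \<le> (1/(8*t))\<^sup>2/(2*t)"
    using a_pos a_le \<open>t > 0\<close> by (intro divide_right_mono power_mono) auto
  also have "\<dots> = 1/(128*t^3)"
    by (simp add: field_simps power2_eq_square power3_eq_cube)
  finally show ?thesis
    using a_le unfolding a_def by simp
qed

lemma sqrt_succ_diff_ge:
  fixes x :: real
  assumes "x \<ge> 0"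
  shows "1/(x + 2) \<le> sqrt (x + 1) - sqrt x"
proof -
  have sum_pos: "sqrt (x + 1) + sqrt x > 0"
    using assms by (simp add: add_pos_nonneg)
  have "sqrt (x + 1) + sqrt x \<le> x + 2"
    using arith_geo_mean_sqrt[of x 1] arith_geo_mean_sqrt[of "x + 1" 1] assms by simp
  then have "1/(x + 2) \<le> 1/(sqrt (x + 1) + sqrt x)"
    using sum_pos by (simp add: frac_le)
  also have "\<dots> = sqrt (x + 1) - sqrt x"
    using sum_pos assms by (simp add: field_simps)
  finally show ?thesis .
qed

lemma ln_succ_diff_approx:
  fixes x :: real
  assumes "x > 0"
  shows "\<bar>ln (x + 1) - ln x - 1/x\<bar> \<le> 1/x\<^sup>2"
proof -
  have upper: "ln (x + 1) - ln x \<le> 1/x"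
    using ln_le_minus_one[of "(x + 1)/x"] assms by (simp add: ln_div field_simps)
  have lower: "1/(x + 1) \<le> ln (x + 1) - ln x"
    using ln_le_minus_one[of "x/(x + 1)"] assms by (simp add: ln_div field_simps)
  have "1/x - 1/(x + 1) = 1/(x*(x + 1))"
    using assms by (simp add: field_simps)
  also have "\<dots> \<le> 1/x\<^sup>2"
    using assms by (intro divide_left_mono) (auto simp: power2_eq_square)
  finally show ?thesis
    using upper lower by linarith
qed

lemma summable_diffs_imp_convergent:
  fixes f :: "nat \<Rightarrow> 'a::real_normed_vector"
  assumes "summable (\<lambda>n. f (Suc n) - f n)"
  shows "convergent f"
proof -
  have "(\<lambda>n. f n - f 0) \<longlonglongrightarrow> (\<Sum>n. f (Suc n) - f n)"
    using summable_LIMSEQ[OF assms] by (simp add: sum_lessThan_telescope)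
  then have "(\<lambda>n. (f n - f 0) + f 0) \<longlonglongrightarrow> (\<Sum>n. f (Suc n) - f n) + f 0"
    by (intro tendsto_add) auto
  then show ?thesis
    unfolding convergent_def by auto
qed

lemma sqrt_div_square_eq_powr:
  fixes x :: real
  assumes "x > 0"
  shows "sqrt x / x\<^sup>2 = x powr (-3/2)"
proof -
  have "x powr (-3/2) = x powr (1/2) / x powr 2"
    by (simp flip: powr_diff)
  then show ?thesis
    using assms by (simp add: powr_half_sqrt)
qed

locale quadratic_recursion =
  fixes \<theta> :: "nat \<Rightarrow> real"
  assumes pos: "\<And>k. \<theta> k > 0"
    and init: "\<theta> 0 = 1"
    and rec: "\<And>k. (\<theta> (Suc k))\<^sup>2 - \<theta> (Suc k) - (\<theta> k)\<^sup>2 = 0"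
begin

lemma rec_eq: "(\<theta> (Suc k))\<^sup>2 - \<theta> (Suc k) = (\<theta> k)\<^sup>2"
  using rec[of k] by simp

lemmas increment_pos = quadratic_step_increment_pos[OF pos pos rec_eq]
  and increment_le = quadratic_step_increment_le[OF pos pos rec_eq]
  and increment_approx = quadratic_step_increment_approx[OF pos pos rec_eq]

lemma theta_lower: "1 + real k / 2 \<le> \<theta> k"
proof (induction k)
  case 0
  then show ?case using init by simp
next
  case (Suc k)
  have "real (Suc k) / 2 = real k / 2 + 1/2"
    by simp
  then show ?case
    using Suc increment_pos[of k] by linarith
qed

lemma theta_upper: "\<theta> k \<le> 1 + real k / 2 + sqrt (real k) / 4"
proof (induction k)
  case 0
  then show ?case using init by simp
next
  case (Suc k)
  have "1/(8 * \<theta> k) \<le> (1/(real k + 2)) / 4"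
    using theta_lower[of k] by (simp add: divide_left_mono)
  also have "\<dots> \<le> (sqrt (real k + 1) - sqrt (real k)) / 4"
    by (rule divide_right_mono) (simp_all add: sqrt_succ_diff_ge)
  finally have "\<theta> (Suc k) - \<theta> k - 1/2 \<le> sqrt (real k + 1) / 4 - sqrt (real k) / 4"
    using increment_le[of k] by (simp add: diff_divide_distrib)
  moreover have "real (Suc k) / 2 = real k / 2 + 1/2" "sqrt (real (Suc k)) = sqrt (real k + 1)"
    by simp_all
  ultimately show ?case
    using Suc by linarith
qed

definition centered :: "nat \<Rightarrow> real"
  where "centered k = \<theta> k - real k / 2 - ln (real k) / 4"

lemma increment_approx_inverse_square:
  assumes "k \<ge> 1"
  shows "\<bar>\<theta> (Suc k) - \<theta> k - 1/2 - 1/(8 * \<theta> k)\<bar> \<le> 1/(real k)\<^sup>2"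
proof -
  have "(real k)\<^sup>2 \<le> (2 * \<theta> k)\<^sup>2"
    using theta_lower[of k] by (intro power_mono) auto
  also have "\<dots> \<le> 4 * \<theta> k ^ 3"
    using theta_lower[of k] by (simp add: power_mult_distrib power_increasing)
  also have "\<dots> \<le> 128 * \<theta> k ^ 3"
    using pos[of k] by simp
  finally have "1/(128 * \<theta> k ^ 3) \<le> 1/(real k)\<^sup>2"
    using assms pos[of k] by (intro divide_left_mono) auto
  then show ?thesis
    using increment_approx[of k] by simp
qed

lemma inverse_theta_approx:
  assumes "k \<ge> 1"
  shows "\<bar>1/(8 * \<theta> k) - 1/(4 * real k)\<bar> \<le> 5/8 * (sqrt (real k) / (real k)\<^sup>2)"
proof -
  define x where "x = real k"
  define t where "t = \<theta> k"
  have x: "x \<ge> 1" "sqrt x \<ge> 1"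
    using assms unfolding x_def by auto
  have t: "t \<ge> 1 + x/2" "t \<le> 1 + x/2 + sqrt x / 4"
    using theta_lower[of k] theta_upper[of k] unfolding t_def x_def by auto
  have "\<bar>1/(8*t) - 1/(4*x)\<bar> = (2*t - x) / (8*t*x)"
    using t x by (simp add: field_simps)
  also have "\<dots> \<le> (5/2 * sqrt x) / (4*x\<^sup>2)"
  proof (rule frac_le)
    show "2*t - x \<le> 5/2 * sqrt x"
      using t x by linarith
    show "4*x\<^sup>2 \<le> 8*t*x"
      using t x by (simp add: power2_eq_square mult_right_mono)
  qed (use x in auto)
  finally show ?thesis
    unfolding t_def x_def by simp
qed

lemma centered_diff_bound:
  assumes "k \<ge> 1"
  shows "\<bar>centered (Suc k) - centered k\<bar> \<le> 2 * real k powr (-3/2)"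
proof -
  let ?x = "real k"
  have x: "?x \<ge> 1"
    using assms by simp
  have combine: "\<bar>u + v - w/4\<bar> \<le> 2 * c"
    if "\<bar>u\<bar> \<le> b" "\<bar>v\<bar> \<le> 5/8 * c" "\<bar>w\<bar> \<le> b" "b \<le> c" "0 \<le> c" for u v w b c :: real
    using that by linarith
  have "centered (Suc k) - centered k =
      (\<theta> (Suc k) - \<theta> k - 1/2 - 1/(8 * \<theta> k)) + (1/(8 * \<theta> k) - 1/(4 * ?x))
        - (ln (?x + 1) - ln ?x - 1/?x) / 4"
    unfolding centered_def by (simp add: field_simps)
  also have "\<bar>\<dots>\<bar> \<le> 2 * (sqrt ?x / ?x\<^sup>2)"
  proof (rule combine)
    show "1/?x\<^sup>2 \<le> sqrt ?x / ?x\<^sup>2"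
      using x by (intro divide_right_mono) auto
  qed (use increment_approx_inverse_square[OF assms] inverse_theta_approx[OF assms]
         ln_succ_diff_approx[of ?x] x in auto)
  also have "sqrt ?x / ?x\<^sup>2 = ?x powr (-3/2)"
    using x by (simp add: sqrt_div_square_eq_powr)
  finally show ?thesis .
qed

lemma convergent_centered: "convergent centered"
proof (rule summable_diffs_imp_convergent)
  have "summable (\<lambda>k. 2 * real k powr (-3/2))"
    by (intro summable_mult) (simp add: summable_real_powr_iff)
  then show "summable (\<lambda>k. centered (Suc k) - centered k)"
    by (rule summable_comparison_test'[where N = 1]) (use centered_diff_bound in auto)
qed

end

theorem theorem7:
  fixes \<theta> :: "nat \<Rightarrow> real"
  assumes pos: "\<And>k. \<theta> k > 0"
    and init: "\<theta> 0 = 1"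
    and rec: "\<And>k. (\<theta> (Suc k))\<^sup>2 - \<theta> (Suc k) - (\<theta> k)\<^sup>2 = 0"
  shows "\<exists>\<zeta>::real. (\<lambda>k. \<theta> k - ((real k + \<zeta> + 1) / 2 + ln (real k) / 4)) \<longlonglongrightarrow> 0"
proof -
  interpret quadratic_recursion \<theta>
    using assms by unfold_locales
  obtain L where "centered \<longlonglongrightarrow> L"
    using convergent_centered unfolding convergent_def by blast
  then have "(\<lambda>k. centered k - L) \<longlonglongrightarrow> 0"
    by (rule LIM_zero)
  moreover have "(\<lambda>k. centered k - L) = (\<lambda>k. \<theta> k - ((real k + (2*L - 1) + 1) / 2 + ln (real k) / 4))"
    unfolding centered_def by (auto simp: field_simps)
  ultimately show ?thesis
    by (intro exI[of _ "2*L - 1"]) simp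
qed

end
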